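(* Let $q\ge2$ and let $(p_1,\dots,p_q)$ and $(f_1,\dots,f_q)$ be vectors of positive reals, each summing to $1$, satisfying $f_1p_1\ge f_2p_2\ge\dots\ge f_qp_q$. Let $1\le z<q$ be an integer and $w=\lfloor z/2\rfloor+1$. Then: (1) if $z$ is even, $\frac{3z+2}{2}f_wp_w+(2z+1)\sum_{j=w+1}^q f_jp_j\le1$; (2) if $z$ is odd, $\frac{z+1}{2}f_wp_w+(2z+1)\sum_{j=w+1}^q f_jp_j\le 1$. *)

theory Defs
  imports Main Complex_Main
begin

end

theory Submission
  imports Defs
begin

text \<open>Put \<open>a\<^sub>k = f\<^sub>k p\<^sub>k\<close>. By AM-GM, \<open>\<Sum> sqrt a\<^sub>k \<le> (\<Sum> f\<^sub>k + \<Sum> p\<^sub>k)/2 = 1\<close>, and since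
  \<open>sqrt a\<^sub>k\<close> decreases, expanding the square gives \<open>\<Sum> (2k - 1) a\<^sub>k \<le> (\<Sum> sqrt a\<^sub>k)\<^sup>2 \<le> 1\<close>.
  In this sum the first \<open>w\<close> terms contribute at least \<open>w\<^sup>2 a\<^sub>w\<close>. Raising the weights of the
  terms \<open>k > w\<close> to \<open>2z + 1\<close> costs at most \<open>\<Sum>\<^sub>k\<^sub>=\<^sub>w\<^sub>+\<^sub>1\<^sup>z (2z + 2 - 2k) a\<^sub>w = (z - w)(z - w + 1) a\<^sub>w\<close>,
  since the weights of the terms \<open>k > z\<close> only decrease. The coefficient of \<open>a\<^sub>w\<close> left over,
  \<open>w\<^sup>2 - (z - w)(z - w + 1)\<close>, is \<open>(3z + 2)/2\<close> for even \<open>z\<close> and \<open>(z + 1)/2\<close> for odd \<open>z\<close>.\<close>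

lemma antimono_on_atLeastAtMost_if_Suc:
  fixes s :: "nat \<Rightarrow> 'a::order"
  assumes "\<And>i. m \<le> i \<Longrightarrow> i < n \<Longrightarrow> s (Suc i) \<le> s i"
  shows "antimono_on {m..n} s"
proof (rule monotone_onI)
  fix x y
  assume "x \<in> {m..n}" "y \<in> {m..n}" "x \<le> y"
  show "s y \<le> s x"
  proof (rule lift_Suc_antimono_le_ivl)
    show "\<And>i. i \<in> {m..<n} \<Longrightarrow> s (Suc i) \<le> s i"
      using assms by simp
    show "{x..<y} \<subseteq> {m..<n}"
      using \<open>x \<in> {m..n}\<close> \<open>y \<in> {m..n}\<close> by auto
  qed fact
qed

lemma sum_sqrt_mult_le_mean:
  fixes f p :: "'a \<Rightarrow> real"
  assumes "\<And>i. i \<in> A \<Longrightarrow> 0 \<le> f i" and "\<And>i. i \<in> A \<Longrightarrow> 0 \<le> p i"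
  shows "(\<Sum>i\<in>A. sqrt (f i * p i)) \<le> (sum f A + sum p A) / 2"
proof -
  have "(\<Sum>i\<in>A. sqrt (f i * p i)) \<le> (\<Sum>i\<in>A. (f i + p i) / 2)"
    using assms by (intro sum_mono arith_geo_mean_sqrt)
  also have "\<dots> = (sum f A + sum p A) / 2"
    by (simp add: sum.distrib flip: sum_divide_distrib)
  finally show ?thesis .
qed

lemma sum_odd_weighted_squares_le_square_sum:
  fixes s :: "nat \<Rightarrow> real"
  assumes "antimono_on {1..n} s" and "\<And>k. k \<in> {1..n} \<Longrightarrow> 0 \<le> s k"
  shows "(\<Sum>k=1..n. (2 * real k - 1) * (s k)\<^sup>2) \<le> (\<Sum>k=1..n. s k)\<^sup>2"
  using assms
proof (induction n)
  case (Suc n)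
  let ?S = "\<Sum>k=1..n. s k" and ?t = "s (Suc n)"
  have "antimono_on {1..n} s"
    using Suc.prems(1) by (rule monotone_on_subset) auto
  with Suc have IH: "(\<Sum>k=1..n. (2 * real k - 1) * (s k)\<^sup>2) \<le> ?S\<^sup>2"
    by simp
  have "(\<Sum>k=1..n. ?t) \<le> ?S"
    by (intro sum_mono monotone_onD[OF Suc.prems(1)]) auto
  then have "real n * ?t * ?t \<le> ?S * ?t"
    using Suc.prems(2)[of "Suc n"] by (simp add: mult_right_mono)
  then have "(\<Sum>k=1..Suc n. (2 * real k - 1) * (s k)\<^sup>2) \<le> ?S\<^sup>2 + 2 * ?S * ?t + ?t\<^sup>2"
    using IH by (simp add: power2_eq_square algebra_simps)
  also have "\<dots> = (\<Sum>k=1..Suc n. s k)\<^sup>2"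
    by (simp add: power2_eq_square algebra_simps)
  finally show ?case .
qed simp

lemma sum_odd_weighted_le_square_sum_sqrt:
  fixes a :: "nat \<Rightarrow> real"
  assumes "antimono_on {1..n} a" and "\<And>k. k \<in> {1..n} \<Longrightarrow> 0 \<le> a k"
  shows "(\<Sum>k=1..n. (2 * real k - 1) * a k) \<le> (\<Sum>k=1..n. sqrt (a k))\<^sup>2"
proof -
  have "antimono_on {1..n} (\<lambda>k. sqrt (a k))"
    using assms(1) by (auto intro!: monotone_onI dest: monotone_onD)
  then have "(\<Sum>k=1..n. (2 * real k - 1) * (sqrt (a k))\<^sup>2) \<le> (\<Sum>k=1..n. sqrt (a k))\<^sup>2"
    by (rule sum_odd_weighted_squares_le_square_sum) (simp add: assms(2))
  moreover have "(\<Sum>k=1..n. (2 * real k - 1) * (sqrt (a k))\<^sup>2) = (\<Sum>k=1..n. (2 * real k - 1) * a k)"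
    using assms(2) by (intro sum.cong) simp_all
  ultimately show ?thesis
    by simp
qed

lemma sum_odd_numbers: "(\<Sum>k=1..w. 2 * real k - 1) = (real w)\<^sup>2"
  by (induction w) (auto simp: power2_eq_square algebra_simps)

lemma sum_reversed_even_numbers:
  assumes "m \<le> n"
  shows "(\<Sum>k=m+1..n. 2 * (real n + 1 - real k)) = (real n - real m) * (real n - real m + 1)"
  using assms
proof (induction n rule: dec_induct)
  case (step i)
  have "(\<Sum>k=m+1..Suc i. 2 * (real (Suc i) + 1 - real k))
      = (\<Sum>k=m+1..i. 2 * (real i + 1 - real k) + 2) + 2"
    using step.hyps by (simp add: sum.cl_ivl_Suc algebra_simps)
  also have "\<dots> = (real i - real m) * (real i - real m + 1) + 2 * (real i - real m) + 2"
    using step by (subst sum.distrib) (simp add: of_nat_diff)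
  finally show ?case
    by (simp add: algebra_simps)
qed simp

lemma odd_weighted_sum_ge_tail:
  fixes a :: "nat \<Rightarrow> real"
  assumes anti: "antimono_on {1..n} a" and nonneg: "\<And>k. k \<in> {1..n} \<Longrightarrow> 0 \<le> a k"
    and "1 \<le> w" "w \<le> z" "z \<le> n"
  shows "((real w)\<^sup>2 - (real z - real w) * (real z - real w + 1)) * a w
           + (2 * real z + 1) * (\<Sum>k=w+1..n. a k)
         \<le> (\<Sum>k=1..n. (2 * real k - 1) * a k)"
proof -
  have head: "(real w)\<^sup>2 * a w \<le> (\<Sum>k=1..w. (2 * real k - 1) * a k)"
  proof -
    have "(real w)\<^sup>2 * a w = (\<Sum>k=1..w. (2 * real k - 1) * a w)"
      using sum_odd_numbers[of w] by (simp flip: sum_distrib_right)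
    also have "\<dots> \<le> (\<Sum>k=1..w. (2 * real k - 1) * a k)"
      using assms(3-5) by (intro sum_mono mult_left_mono monotone_onD[OF anti]) auto
    finally show ?thesis .
  qed
  define cost where "cost k = 2 * (real z + 1 - real k) * a k" for k
  have raise: "(2 * real z + 1) * (\<Sum>k=w+1..n. a k)
      = (\<Sum>k=w+1..n. (2 * real k - 1) * a k) + (\<Sum>k=w+1..n. cost k)"
    unfolding cost_def sum_distrib_left sum.distrib[symmetric]
    by (intro sum.cong) (simp_all add: algebra_simps)
  have "(\<Sum>k=w+1..z. cost k) \<le> (\<Sum>k=w+1..z. 2 * (real z + 1 - real k) * a w)"
    unfolding cost_def using assms(3-5)
    by (intro sum_mono mult_left_mono monotone_onD[OF anti]) auto
  also have "\<dots> = (real z - real w) * (real z - real w + 1) * a w"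
    using sum_reversed_even_numbers[OF \<open>w \<le> z\<close>] by (simp flip: sum_distrib_right)
  finally have cost_up_to_z: "(\<Sum>k=w+1..z. cost k) \<le> (real z - real w) * (real z - real w + 1) * a w" .
  have cost_beyond_z: "(\<Sum>k=z+1..n. cost k) \<le> 0"
    unfolding cost_def using nonneg assms(3,4)
    by (intro sum_nonpos) (auto intro: mult_nonpos_nonneg)
  have "(\<Sum>k=w+1..n. cost k) = (\<Sum>k=w+1..z. cost k) + (\<Sum>k=z+1..n. cost k)"
    using sum.ub_add_nat[of "w+1" z cost "n - z"] assms(4,5) by simp
  moreover have "(\<Sum>k=1..n. (2 * real k - 1) * a k)
      = (\<Sum>k=1..w. (2 * real k - 1) * a k) + (\<Sum>k=w+1..n. (2 * real k - 1) * a k)"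
    using sum.ub_add_nat[of 1 w "\<lambda>k. (2 * real k - 1) * a k" "n - w"] assms(3-5) by simp
  ultimately show ?thesis
    using head raise cost_up_to_z cost_beyond_z by (simp add: algebra_simps)
qed

lemma tail_coefficient_eq:
  fixes z w :: nat
  assumes "w = z div 2 + 1"
  shows "(real w)\<^sup>2 - (real z - real w) * (real z - real w + 1)
           = (if even z then (3 * real z + 2) / 2 else (real z + 1) / 2)"
proof (cases "even z")
  case True
  then obtain m where "z = 2 * m" by blast
  with assms show ?thesis by (simp add: power2_eq_square field_simps)
next
  case False
  then obtain m where "z = 2 * m + 1" using oddE by blast
  with assms show ?thesis by (simp add: power2_eq_square field_simps)
qed

theorem proposition5p5:
  fixes q z w :: nat and p f :: "nat \<Rightarrow> real"
  assumes "q \<ge> 2"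
    and "\<forall>i\<in>{1..q}. p i > 0" and "\<forall>i\<in>{1..q}. f i > 0"
    and "(\<Sum>i=1..q. p i) = 1" and "(\<Sum>i=1..q. f i) = 1"
    and "\<forall>i. 1 \<le> i \<and> i < q \<longrightarrow> f (i+1) * p (i+1) \<le> f i * p i"
    and "1 \<le> z" and "z < q"
    and "w = z div 2 + 1"
  shows "(even z \<longrightarrow>
           (3 * real z + 2) / 2 * (f w * p w) + (2 * real z + 1) * (\<Sum>j=w+1..q. f j * p j) \<le> 1)
       \<and> (odd z \<longrightarrow>
           (real z + 1) / 2 * (f w * p w) + (2 * real z + 1) * (\<Sum>j=w+1..q. f j * p j) \<le> 1)"
proof -
  define a where "a k = f k * p k" for k
  have anti: "antimono_on {1..q} a"
    using assms(6) unfolding a_def by (intro antimono_on_atLeastAtMost_if_Suc) simp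
  have nonneg: "\<And>k. k \<in> {1..q} \<Longrightarrow> 0 \<le> a k"
    using assms(2,3) by (simp add: a_def less_imp_le)
  have "(\<Sum>k=1..q. sqrt (a k)) \<le> 1"
    using sum_sqrt_mult_le_mean[of "{1..q}" f p] assms(2-5) by (simp add: a_def less_imp_le)
  moreover have "0 \<le> (\<Sum>k=1..q. sqrt (a k))"
    by (intro sum_nonneg real_sqrt_ge_zero nonneg)
  ultimately have "(\<Sum>k=1..q. (2 * real k - 1) * a k) \<le> 1"
    using sum_odd_weighted_le_square_sum_sqrt[OF anti nonneg] power_le_one[of _ 2] by fastforce
  moreover have "w \<le> z"
    using assms(7,9) by presburger
  ultimately have "((real w)\<^sup>2 - (real z - real w) * (real z - real w + 1)) * a w
      + (2 * real z + 1) * (\<Sum>k=w+1..q. a k) \<le> 1"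
    using odd_weighted_sum_ge_tail[OF anti nonneg, of w z] assms(8,9) by simp
  then show ?thesis
    unfolding tail_coefficient_eq[OF assms(9)] a_def by (simp split: if_splits)
qed

end
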